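(* Let $X$ be a finite set and let $\bar G$ be the inductive limit of a chain of epimorphisms $G_1\xrightarrow{\alpha_1}G_2\xrightarrow{\alpha_2}\cdots$, where each $G_i=\langle X\mid\mathcal R_i\rangle$ is a finitely presented hyperbolic group and each $\alpha_i$ is induced by the identity map $X\to X$. For $i\in\mathbb N$ let $r_i$ be the radius of $\alpha_i$ and let $\delta_i$ be a hyperbolicity constant of $G_i$ with respect to $X$. If $\bar G$ is lacunary hyperbolic, then either $\bar G$ is finitely presented (hence hyperbolic), or $\limsup_{i\to\infty} r_i=\infty$ and $\limsup_{i\to\infty}\delta_i=\infty$.
   Context: For a homomorphism $\alpha:G\to G'$ with $G=\langle X\rangle$, $|X|<\infty$, the radius of $\alpha$ is the maximal radius of a ball in the Cayley graph $\Gamma(G,X)$ centered at $1_G$ such that every element of that ball other than $1_G$ is mapped to a non-trivial element of $G'$. A hyperbolicity constant of $G_i$ with respect to $X$ is a $\delta>0$ such that all geodesic triangles in $\Gamma(G_i,X)$ are $\delta$-slim (each side lies in the $\delta$-neighborhood of the union of the other two). A finitely generated group $G=\langle X\rangle$ is lacunary hyperbolic if for some unbounded sequence of positive scaling constants $(d_i)$ and some non-principal ultrafilter $\omega$, the asymptotic cone $\mathrm{Con}^\omega(G,(d_i))$ (the $\omega$-ultralimit of the based metric spaces $(\Gamma(G,X), d/d_i, 1)$, $d$ the word metric) is an $\mathbb R$-tree. *)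

theory Defs
  imports Complex_Main "HOL-Library.Extended_Nat" "HOL-Library.Extended_Real"
    "HOL-Library.Liminf_Limsup"
begin

text \<open>Words over the finite generating set X (the finite type 'x) and its inverses:
  (x, True) stands for x, (x, False) for x^-1.\<close>
type_synonym 'x word = "('x \<times> bool) list"

inductive pres_eq :: "'x word set \<Rightarrow> 'x word \<Rightarrow> 'x word \<Rightarrow> bool" for R where
  pe_refl: "pres_eq R w w"
| pe_sym: "pres_eq R u v \<Longrightarrow> pres_eq R v u"
| pe_trans: "pres_eq R u v \<Longrightarrow> pres_eq R v w \<Longrightarrow> pres_eq R u w"
| pe_cancel: "pres_eq R (u @ [(x, b), (x, \<not> b)] @ v) (u @ v)"
| pe_rel: "r \<in> R \<Longrightarrow> pres_eq R (u @ r @ v) (u @ v)"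

text \<open>A group generated by X is given by the relation E on words
  ("u and v represent the same element").\<close>
definition wdist :: "('x word \<Rightarrow> 'x word \<Rightarrow> bool) \<Rightarrow> 'x word \<Rightarrow> 'x word \<Rightarrow> nat" where
  "wdist E u v = (LEAST n. \<exists>w. length w = n \<and> E (u @ w) v)"

definition geod :: "('x word \<Rightarrow> 'x word \<Rightarrow> bool) \<Rightarrow> 'x word \<Rightarrow> 'x word \<Rightarrow> (nat \<Rightarrow> 'x word) \<Rightarrow> bool" where
  "geod E u v p \<longleftrightarrow> E (p 0) u \<and> E (p (wdist E u v)) v \<and>
     (\<forall>k < wdist E u v. wdist E (p k) (p (Suc k)) \<le> 1)"

definition side_close ::
  "('x word \<Rightarrow> 'x word \<Rightarrow> bool) \<Rightarrow> real \<Rightarrow> 'x word \<Rightarrow> 'x word \<Rightarrow> 'x word \<Rightarrow>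
   (nat \<Rightarrow> 'x word) \<Rightarrow> (nat \<Rightarrow> 'x word) \<Rightarrow> (nat \<Rightarrow> 'x word) \<Rightarrow> bool" where
  "side_close E \<delta> u v w p q s \<longleftrightarrow>
     (\<forall>k \<le> wdist E u v. \<exists>j.
        (j \<le> wdist E v w \<and> real (wdist E (p k) (q j)) \<le> \<delta>) \<or>
        (j \<le> wdist E w u \<and> real (wdist E (p k) (s j)) \<le> \<delta>))"

definition hyp_const :: "('x word \<Rightarrow> 'x word \<Rightarrow> bool) \<Rightarrow> real \<Rightarrow> bool" where
  "hyp_const E \<delta> \<longleftrightarrow> \<delta> > 0 \<and>
     (\<forall>u v w p q s. geod E u v p \<and> geod E v w q \<and> geod E w u s \<longrightarrow>
        side_close E \<delta> u v w p q s \<and> side_close E \<delta> v w u q s p \<and>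
        side_close E \<delta> w u v s p q)"

definition hyperbolic :: "('x word \<Rightarrow> 'x word \<Rightarrow> bool) \<Rightarrow> bool" where
  "hyperbolic E \<longleftrightarrow> (\<exists>\<delta>. hyp_const E \<delta>)"

definition fin_presented :: "('x word \<Rightarrow> 'x word \<Rightarrow> bool) \<Rightarrow> bool" where
  "fin_presented E \<longleftrightarrow> (\<exists>R. finite R \<and> (\<forall>u v. E u v \<longleftrightarrow> pres_eq R u v))"

definition radius :: "('x word \<Rightarrow> 'x word \<Rightarrow> bool) \<Rightarrow> ('x word \<Rightarrow> 'x word \<Rightarrow> bool) \<Rightarrow> enat" where
  "radius E E' = Sup {enat r | r. \<forall>w. wdist E [] w \<le> r \<and> \<not> E w [] \<longrightarrow> \<not> E' w []}"

definition nonprincipal_ultrafilter :: "nat filter \<Rightarrow> bool" where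
  "nonprincipal_ultrafilter \<omega> \<longleftrightarrow> \<omega> \<noteq> bot \<and>
     (\<forall>P. eventually P \<omega> \<or> eventually (\<lambda>n. \<not> P n) \<omega>) \<and>
     (\<forall>m. eventually (\<lambda>n. n \<noteq> m) \<omega>)"

definition cone_pts :: "('x word \<Rightarrow> 'x word \<Rightarrow> bool) \<Rightarrow> nat filter \<Rightarrow> (nat \<Rightarrow> real) \<Rightarrow> (nat \<Rightarrow> 'x word) set" where
  "cone_pts E \<omega> d = {s. \<exists>C. eventually (\<lambda>n. real (wdist E [] (s n)) / d n \<le> C) \<omega>}"

definition cone_pdist :: "('x word \<Rightarrow> 'x word \<Rightarrow> bool) \<Rightarrow> nat filter \<Rightarrow> (nat \<Rightarrow> real) \<Rightarrow>
    (nat \<Rightarrow> 'x word) \<Rightarrow> (nat \<Rightarrow> 'x word) \<Rightarrow> real" where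
  "cone_pdist E \<omega> d s t = Lim \<omega> (\<lambda>n. real (wdist E (s n) (t n)) / d n)"

definition cone :: "('x word \<Rightarrow> 'x word \<Rightarrow> bool) \<Rightarrow> nat filter \<Rightarrow> (nat \<Rightarrow> real) \<Rightarrow> (nat \<Rightarrow> 'x word) set set" where
  "cone E \<omega> d = (\<lambda>s. {t \<in> cone_pts E \<omega> d. cone_pdist E \<omega> d s t = 0}) ` cone_pts E \<omega> d"

definition cone_dist :: "('x word \<Rightarrow> 'x word \<Rightarrow> bool) \<Rightarrow> nat filter \<Rightarrow> (nat \<Rightarrow> real) \<Rightarrow>
    (nat \<Rightarrow> 'x word) set \<Rightarrow> (nat \<Rightarrow> 'x word) set \<Rightarrow> real" where
  "cone_dist E \<omega> d A B = cone_pdist E \<omega> d (SOME s. s \<in> A) (SOME t. t \<in> B)"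

definition geodesic_seg :: "'p set \<Rightarrow> ('p \<Rightarrow> 'p \<Rightarrow> real) \<Rightarrow> 'p \<Rightarrow> 'p \<Rightarrow> (real \<Rightarrow> 'p) \<Rightarrow> bool" where
  "geodesic_seg M dm x y g \<longleftrightarrow> g 0 = x \<and> g (dm x y) = y \<and> g ` {0..dm x y} \<subseteq> M \<and>
     (\<forall>s\<in>{0..dm x y}. \<forall>t\<in>{0..dm x y}. dm (g s) (g t) = \<bar>s - t\<bar>)"

definition arc_in :: "'p set \<Rightarrow> ('p \<Rightarrow> 'p \<Rightarrow> real) \<Rightarrow> 'p \<Rightarrow> 'p \<Rightarrow> (real \<Rightarrow> 'p) \<Rightarrow> bool" where
  "arc_in M dm x y g \<longleftrightarrow> g 0 = x \<and> g 1 = y \<and> g ` {0..1} \<subseteq> M \<and> inj_on g {0..1} \<and>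
     (\<forall>t\<in>{0..1}. \<forall>e>0. \<exists>\<eta>>0. \<forall>t'\<in>{0..1}. \<bar>t' - t\<bar> < \<eta> \<longrightarrow> dm (g t') (g t) < e)"

definition R_tree :: "'p set \<Rightarrow> ('p \<Rightarrow> 'p \<Rightarrow> real) \<Rightarrow> bool" where
  "R_tree M dm \<longleftrightarrow>
     (\<forall>x\<in>M. \<forall>y\<in>M. dm x y \<ge> 0 \<and> dm x y = dm y x \<and> (dm x y = 0 \<longleftrightarrow> x = y) \<and>
        (\<forall>z\<in>M. dm x z \<le> dm x y + dm y z)) \<and>
     (\<forall>x\<in>M. \<forall>y\<in>M. \<exists>g. geodesic_seg M dm x y g \<and>
        (\<forall>h. arc_in M dm x y h \<longrightarrow> h ` {0..1} = g ` {0..dm x y}))"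

definition lacunary_hyperbolic :: "('x word \<Rightarrow> 'x word \<Rightarrow> bool) \<Rightarrow> bool" where
  "lacunary_hyperbolic E \<longleftrightarrow> (\<exists>d \<omega>. (\<forall>n. d n > 0) \<and> \<not> bdd_above (range d) \<and>
     nonprincipal_ultrafilter \<omega> \<and> R_tree (cone E \<omega> d) (cone_dist E \<omega> d))"

end

theory Submission
  imports Defs
begin

(* A delta-hyperbolic group <X | R> is already presented by its relators of length at most
   4 delta + 10. If a and b are geodesic words with a c = b, thin triangles make a and b
   fellow travel at distance 2 delta + 4, and the ladder between them is a product of such
   short relators; walking along any word and replacing each prefix by a geodesic word then
   reduces it to a geodesic representative using short relators only.

   Along the chain, each of the finitely many words of length at most K becomes trivial in at
   most one step, so eventually alpha_i is injective on the K-ball: the radii tend to infinity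
   for every such chain. If delta_i < B along a tail, take K >= 4 B + 10: every relation of
   G_(i+1) follows from short relators, which already hold in G_i. Hence the chain stabilises
   and the limit is some G_N, finitely presented and hyperbolic. *)

definition winv :: "'x word \<Rightarrow> 'x word" where
  "winv w = rev (map (\<lambda>(x, b). (x, \<not> b)) w)"

lemma winv_Nil [simp]: "winv [] = []"
  by (simp add: winv_def)

lemma winv_Cons [simp]: "winv (a # w) = winv w @ [(fst a, \<not> snd a)]"
  by (cases a) (simp add: winv_def)

lemma winv_append [simp]: "winv (u @ v) = winv v @ winv u"
  by (simp add: winv_def)

lemma winv_winv [simp]: "winv (winv w) = w"
  by (induction w) auto

lemma length_winv [simp]: "length (winv w) = length w"
  by (simp add: winv_def)

declare pres_eq.pe_refl [intro, simp] and pres_eq.pe_trans [trans]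

lemma pres_eq_append_cong: "pres_eq R a b \<Longrightarrow> pres_eq R (u @ a @ v) (u @ b @ v)"
proof (induction arbitrary: u v rule: pres_eq.induct)
  case (pe_cancel u' x b v')
  show ?case using pres_eq.pe_cancel[of R "u @ u'" x b "v' @ v"] by simp
next
  case (pe_rel r u' v')
  show ?case using pres_eq.pe_rel[OF pe_rel, of "u @ u'" "v' @ v"] by simp
qed (blast intro: pres_eq.intros)+

lemma pres_eq_append: "pres_eq R a b \<Longrightarrow> pres_eq R c d \<Longrightarrow> pres_eq R (a @ c) (b @ d)"
  using pres_eq_append_cong[of R a b "[]" c] pres_eq_append_cong[of R c d b "[]"]
  by (simp add: pres_eq.pe_trans)

lemma pres_eq_append_winv: "pres_eq R (w @ winv w) []"
proof (induction w)
  case (Cons a w)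
  obtain x b where a: "a = (x, b)" by force
  have "pres_eq R ([a] @ (w @ winv w) @ [(x, \<not> b)]) ([a] @ [] @ [(x, \<not> b)])"
    using Cons.IH by (rule pres_eq_append_cong)
  also have "pres_eq R ([a] @ [] @ [(x, \<not> b)]) []"
    using pres_eq.pe_cancel[of R "[]" x b "[]"] a by simp
  finally show ?case using a by simp
qed simp

lemma pres_eq_winv_append: "pres_eq R (winv w @ w) []"
  using pres_eq_append_winv[of R "winv w"] by simp

lemma pres_eq_append_cancel_left:
  assumes "pres_eq R (w @ u) (w @ v)"
  shows "pres_eq R u v"
proof -
  have cancel: "pres_eq R ((winv w @ w) @ x) x" for x
    using pres_eq_append[OF pres_eq_winv_append pres_eq.pe_refl, of R w x] by simp
  have "pres_eq R u ((winv w @ w) @ u)"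
    using cancel by (rule pres_eq.pe_sym)
  also have "pres_eq R \<dots> ((winv w @ w) @ v)"
    using pres_eq_append[OF pres_eq.pe_refl assms, of "winv w"] by simp
  also have "pres_eq R \<dots> v"
    by (rule cancel)
  finally show ?thesis .
qed

lemma pres_eq_iff_append_winv: "pres_eq R u v \<longleftrightarrow> pres_eq R (u @ winv v) []"
proof
  assume "pres_eq R u v"
  then have "pres_eq R (u @ winv v) (v @ winv v)"
    by (rule pres_eq_append) simp
  also have "pres_eq R \<dots> []"
    by (rule pres_eq_append_winv)
  finally show "pres_eq R (u @ winv v) []" .
next
  assume trivial: "pres_eq R (u @ winv v) []"
  have "pres_eq R (u @ winv v @ v) (u @ [])"
    by (rule pres_eq_append) (simp_all add: pres_eq_winv_append)
  from pres_eq.pe_sym[OF this] have "pres_eq R u ((u @ winv v) @ v)"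
    by simp
  also have "pres_eq R \<dots> ([] @ v)"
    using trivial by (rule pres_eq_append) simp
  finally show "pres_eq R u v" by simp
qed

lemma pres_eq_mono_relators:
  assumes "\<And>s. s \<in> S \<Longrightarrow> pres_eq R s []" and "pres_eq S u v"
  shows "pres_eq R u v"
  using assms(2)
proof (induction rule: pres_eq.induct)
  case (pe_rel r u' v')
  show ?case using pres_eq_append_cong[OF assms(1)[OF pe_rel], of u' v'] by simp
qed (blast intro: pres_eq.intros)+

lemma pres_eq_chain_mono:
  assumes "\<And>i r. r \<in> R i \<Longrightarrow> pres_eq (R (Suc i)) r []"
    and "i \<le> j" and "pres_eq (R i) u v"
  shows "pres_eq (R j) u v"
  using assms(2,3)
proof (induction j rule: dec_induct)
  case (step n)
  then show ?case by (blast intro: pres_eq_mono_relators assms(1))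
qed

lemma wdist_witness: "\<exists>w. length w = wdist (pres_eq R) u v \<and> pres_eq R (u @ w) v"
proof -
  have "pres_eq R (u @ winv u @ v) ([] @ v)"
    using pres_eq_append[OF pres_eq_append_winv pres_eq.pe_refl, of R u v] by simp
  then have "\<exists>n w. length w = n \<and> pres_eq R (u @ w) v" by auto
  from LeastI_ex[OF this] show ?thesis unfolding wdist_def by blast
qed

lemma wdist_le_length: "pres_eq R (u @ w) v \<Longrightarrow> wdist (pres_eq R) u v \<le> length w"
  unfolding wdist_def by (rule Least_le) blast

lemma wdist_Nil_le_length: "wdist (pres_eq R) [] w \<le> length w"
  by (rule wdist_le_length) simp

lemma wdist_sym: "wdist (pres_eq R) u v = wdist (pres_eq R) v u"
proof -
  have "wdist (pres_eq R) v u \<le> wdist (pres_eq R) u v" for u v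
  proof -
    obtain w where w: "length w = wdist (pres_eq R) u v" "pres_eq R (u @ w) v"
      using wdist_witness by blast
    have "pres_eq R (v @ winv w) (u @ w @ winv w)"
      using pres_eq.pe_sym[OF pres_eq_append[OF w(2) pres_eq.pe_refl]] by simp
    also have "pres_eq R \<dots> (u @ [])"
      by (rule pres_eq_append) (simp_all add: pres_eq_append_winv)
    finally have "pres_eq R (v @ winv w) u" by simp
    then show ?thesis using wdist_le_length w(1) by fastforce
  qed
  then show ?thesis by (meson antisym)
qed

lemma wdist_triangle: "wdist (pres_eq R) u z \<le> wdist (pres_eq R) u v + wdist (pres_eq R) v z"
proof -
  obtain w1 where w1: "length w1 = wdist (pres_eq R) u v" "pres_eq R (u @ w1) v"
    using wdist_witness by blast
  obtain w2 where w2: "length w2 = wdist (pres_eq R) v z" "pres_eq R (v @ w2) z"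
    using wdist_witness by blast
  have "pres_eq R (u @ w1 @ w2) z"
    using pres_eq.pe_trans[OF pres_eq_append[OF w1(2) pres_eq.pe_refl] w2(2)] by simp
  then show ?thesis using wdist_le_length[of R u "w1 @ w2" z] w1(1) w2(1) by simp
qed

lemma wdist_eq_0_iff: "wdist (pres_eq R) u v = 0 \<longleftrightarrow> pres_eq R u v"
  using wdist_witness[of R u v] wdist_le_length[of R u "[]" v] by auto

lemma wdist_cong_right: "pres_eq R v v' \<Longrightarrow> wdist (pres_eq R) u v = wdist (pres_eq R) u v'"
  using wdist_triangle[of R u v v'] wdist_triangle[of R u v' v]
    wdist_eq_0_iff[of R v v'] wdist_eq_0_iff[of R v' v] pres_eq.pe_sym[of R v v']
  by simp

lemma wdist_take_take:
  assumes "i \<le> j"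
  shows "wdist (pres_eq R) (take i w) (take j w) \<le> j - i"
proof -
  have "take j w = take i w @ take (j - i) (drop i w)"
    using assms by (metis le_add_diff_inverse take_add)
  then have "wdist (pres_eq R) (take i w) (take j w) \<le> length (take (j - i) (drop i w))"
    by (intro wdist_le_length) simp
  then show ?thesis by simp
qed

definition geodesic_word :: "'x word set \<Rightarrow> 'x word \<Rightarrow> bool" where
  "geodesic_word R a \<longleftrightarrow> wdist (pres_eq R) [] a = length a"

lemma geodesic_word_exists: "\<exists>a. geodesic_word R a \<and> pres_eq R a x"
proof -
  obtain a where a: "length a = wdist (pres_eq R) [] x" "pres_eq R a x"
    using wdist_witness[of R "[]" x] by auto
  then have "wdist (pres_eq R) [] a = length a" using wdist_cong_right by metis
  with a show ?thesis unfolding geodesic_word_def by blast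
qed

lemma geodesic_word_take:
  assumes "geodesic_word R a"
  shows "geodesic_word R (take t a)"
proof (cases "t \<le> length a")
  case True
  have "length a \<le> wdist (pres_eq R) [] (take t a) + wdist (pres_eq R) (take t a) (take (length a) a)"
    using assms wdist_triangle[of R "[]" a "take t a"] unfolding geodesic_word_def by simp
  also have "\<dots> \<le> wdist (pres_eq R) [] (take t a) + (length a - t)"
    using wdist_take_take[OF True, of R a] by simp
  finally show ?thesis
    using wdist_Nil_le_length[of R "take t a"] True unfolding geodesic_word_def by simp
qed (use assms in simp)

lemma geod_take:
  assumes "geodesic_word R a"
  shows "geod (pres_eq R) [] a (\<lambda>k. take k a)"
  unfolding geod_def
proof (intro conjI allI impI)
  fix k
  show "wdist (pres_eq R) (take k a) (take (Suc k) a) \<le> 1"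
    using wdist_take_take[of k "Suc k" R a] by simp
qed (use assms in \<open>simp_all add: geodesic_word_def\<close>)

lemma geod_take_rev:
  assumes "geodesic_word R b"
  shows "geod (pres_eq R) b [] (\<lambda>k. take (length b - k) b)"
  unfolding geod_def
proof (intro conjI allI impI)
  fix k
  assume "k < wdist (pres_eq R) b []"
  then have "length b - Suc k \<le> length b - k" by simp
  from wdist_take_take[OF this, of R b]
  show "wdist (pres_eq R) (take (length b - k) b) (take (length b - Suc k) b) \<le> 1"
    using wdist_sym[of R "take (length b - k) b"] by simp
qed (use assms wdist_sym[of R b "[]"] in \<open>simp_all add: geodesic_word_def\<close>)

lemma geod_step:
  assumes "wdist (pres_eq R) u v \<le> 1"
  shows "geod (pres_eq R) u v (\<lambda>k. if k = 0 then u else v)"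
  using assms wdist_eq_0_iff[of R u v] unfolding geod_def by auto

lemma geodesic_word_length_le:
  assumes "geodesic_word R b"
  shows "length b \<le> length a + wdist (pres_eq R) a b"
  using assms wdist_triangle[of R "[]" b a] wdist_Nil_le_length[of R a]
  unfolding geodesic_word_def by simp

lemma geodesic_word_take_same_length:
  assumes gp: "geodesic_word R p" and gb: "geodesic_word R b" and "s \<le> length b"
  shows "wdist (pres_eq R) p (take (length p) b) \<le> 2 * wdist (pres_eq R) p (take s b)"
proof -
  let ?d = "wdist (pres_eq R)"
  define t Q T where "t = length p" and "Q = take s b" and "T = take t b"
  have gQ: "geodesic_word R Q" and lQ: "length Q = s"
    using geodesic_word_take[OF gb] assms(3) unfolding Q_def by auto
  have "t \<le> s + ?d p Q" "s \<le> t + ?d p Q"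
    using geodesic_word_length_le[OF gp, of Q] geodesic_word_length_le[OF gQ, of p]
      wdist_sym[of R p Q] lQ unfolding t_def by simp_all
  moreover have "?d Q T \<le> (if s \<le> t then t - s else s - t)"
    using wdist_take_take[of s t R b] wdist_take_take[of t s R b] wdist_sym[of R Q T]
    unfolding Q_def T_def by auto
  moreover have "?d p T \<le> ?d p Q + ?d Q T"
    by (rule wdist_triangle)
  ultimately show ?thesis unfolding Q_def T_def t_def by (auto split: if_splits)
qed

lemma geodesic_words_fellow_travel:
  assumes hc: "hyp_const (pres_eq R) \<delta>"
    and ga: "geodesic_word R a" and gb: "geodesic_word R b"
    and ab: "wdist (pres_eq R) a b \<le> 1"
    and ta: "t \<le> length a" and tb: "t \<le> length b"
  shows "real (wdist (pres_eq R) (take t a) (take t b)) \<le> 2 * \<delta> + 4"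
proof -
  let ?d = "wdist (pres_eq R)"
  define P T where "P = take t a" and "T = take t b"
  have gP: "geodesic_word R P" and lP: "length P = t"
    using geodesic_word_take[OF ga] ta unfolding P_def by auto
  have "side_close (pres_eq R) \<delta> [] a b
      (\<lambda>k. take k a) (\<lambda>k. if k = 0 then a else b) (\<lambda>k. take (length b - k) b)"
    using hc geod_take[OF ga] geod_step[OF ab] geod_take_rev[OF gb]
    unfolding hyp_const_def by blast
  then obtain j where
    "(j \<le> ?d a b \<and> real (?d P (if j = 0 then a else b)) \<le> \<delta>) \<or>
     (j \<le> ?d b [] \<and> real (?d P (take (length b - j) b)) \<le> \<delta>)"
    using ga ta unfolding side_close_def geodesic_word_def P_def by auto
  then show ?thesis
  proof
    assume near_jump: "j \<le> ?d a b \<and> real (?d P (if j = 0 then a else b)) \<le> \<delta>"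
    have "?d (if j = 0 then a else b) a \<le> 1"
      using ab wdist_sym[of R a b] wdist_eq_0_iff[of R a a] by auto
    then have Pa: "real (?d P a) \<le> \<delta> + 1"
      using near_jump wdist_triangle[of R P a "if j = 0 then a else b"] by linarith
    have "?d P T \<le> ?d P a + ?d a b + ?d b T"
      using wdist_triangle[of R P T a] wdist_triangle[of R a T b] by simp
    moreover have "?d b T \<le> length b - t"
      using wdist_take_take[OF tb, of R b] wdist_sym[of R b T] unfolding T_def by simp
    moreover have "length a \<le> t + ?d P a"
      using geodesic_word_length_le[OF ga, of P] lP by simp
    moreover have "length b \<le> length a + 1"
      using geodesic_word_length_le[OF gb, of a] ab by simp
    ultimately have "?d P T \<le> 2 * ?d P a + 2" using ab tb by linarith
    with Pa show ?thesis unfolding P_def T_def by linarith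
  next
    assume "j \<le> ?d b [] \<and> real (?d P (take (length b - j) b)) \<le> \<delta>"
    moreover have "?d P T \<le> 2 * ?d P (take (length b - j) b)"
      using geodesic_word_take_same_length[OF gP gb, of "length b - j"] lP
      unfolding T_def by simp
    ultimately show ?thesis
      using hc unfolding P_def T_def hyp_const_def by linarith
  qed
qed

definition short_relators :: "'x word set \<Rightarrow> real \<Rightarrow> 'x word set" where
  "short_relators R c = {s. real (length s) \<le> c \<and> pres_eq R s []}"

lemma pres_eq_short_relatorsI:
  assumes "pres_eq R u v" and "real (length u + length v) \<le> c"
  shows "pres_eq (short_relators R c) u v"
proof -
  have "u @ winv v \<in> short_relators R c"
    using assms(2) pres_eq_iff_append_winv[THEN iffD1, OF assms(1)]
    unfolding short_relators_def by simp
  then have "pres_eq (short_relators R c) ([] @ (u @ winv v) @ []) ([] @ [])"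
    by (rule pres_eq.pe_rel)
  then show ?thesis using pres_eq_iff_append_winv[THEN iffD2] by simp
qed

lemma pres_eq_short_relatorsD: "pres_eq (short_relators R c) u v \<Longrightarrow> pres_eq R u v"
  by (rule pres_eq_mono_relators) (simp_all add: short_relators_def)

(* The rungs rho_t join take t a to take t b; the cell between two consecutive rungs is a
   relator of length at most 2 L + 2. *)
lemma short_relators_ladder:
  assumes "\<And>t. t \<le> m \<Longrightarrow> real (wdist (pres_eq R) (take t a) (take t b)) \<le> L"
    and "m \<le> length a" and "m \<le> length b"
  shows "\<exists>\<rho>. real (length \<rho>) \<le> L \<and>
    pres_eq (short_relators R (2 * L + 2)) (take m a @ \<rho>) (take m b)"
  using assms
proof (induction m)
  case 0
  then have "0 \<le> L" by force
  then show ?case by (intro exI[of _ "[]"]) simp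
next
  case (Suc t)
  let ?S = "short_relators R (2 * L + 2)"
  obtain \<rho> where \<rho>: "real (length \<rho>) \<le> L" "pres_eq ?S (take t a @ \<rho>) (take t b)"
    using Suc.IH Suc.prems by (metis Suc_leD le_SucI)
  obtain \<rho>' where \<rho>': "length \<rho>' = wdist (pres_eq R) (take (Suc t) a) (take (Suc t) b)"
    "pres_eq R (take (Suc t) a @ \<rho>') (take (Suc t) b)"
    using wdist_witness by blast
  have len\<rho>': "real (length \<rho>') \<le> L" using Suc.prems(1) \<rho>'(1) by simp
  have ta: "take (Suc t) a = take t a @ [a ! t]" and tb: "take (Suc t) b = take t b @ [b ! t]"
    using Suc.prems by (simp_all add: take_Suc_conv_app_nth)
  have "pres_eq R (take t a @ \<rho> @ [b ! t]) (take (Suc t) b)"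
    using pres_eq_append[OF pres_eq_short_relatorsD[OF \<rho>(2)] pres_eq.pe_refl] tb by simp
  then have "pres_eq R (take t a @ \<rho> @ [b ! t]) (take t a @ [a ! t] @ \<rho>')"
    using pres_eq.pe_trans[OF _ pres_eq.pe_sym[OF \<rho>'(2)]] ta by simp
  then have "pres_eq R (\<rho> @ [b ! t]) ([a ! t] @ \<rho>')"
    by (rule pres_eq_append_cancel_left)
  then have "pres_eq R ([a ! t] @ \<rho>') (\<rho> @ [b ! t])"
    by (rule pres_eq.pe_sym)
  then have cell: "pres_eq ?S ([a ! t] @ \<rho>') (\<rho> @ [b ! t])"
    using \<rho>(1) len\<rho>' by (auto intro!: pres_eq_short_relatorsI)
  have "pres_eq ?S (take t a @ [a ! t] @ \<rho>') (take t a @ \<rho> @ [b ! t])"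
    using pres_eq_append[OF pres_eq.pe_refl cell] by simp
  also have "pres_eq ?S (take t a @ \<rho> @ [b ! t]) (take t b @ [b ! t])"
    using pres_eq_append[OF \<rho>(2) pres_eq.pe_refl] by simp
  finally have "pres_eq ?S (take (Suc t) a @ \<rho>') (take (Suc t) b)"
    using ta tb by simp
  with len\<rho>' show ?case by blast
qed

lemma geodesic_words_append_short_relators:
  assumes hc: "hyp_const (pres_eq R) \<delta>"
    and ga: "geodesic_word R a" and gb: "geodesic_word R b"
    and ac: "pres_eq R (a @ [c]) b"
  shows "pres_eq (short_relators R (4 * \<delta> + 10)) (a @ [c]) b"
proof -
  let ?S = "short_relators R (4 * \<delta> + 10)"
  define m where "m = min (length a) (length b)"
  have ab: "wdist (pres_eq R) a b \<le> 1"
    using wdist_le_length[OF ac] by simp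
  have "length b \<le> length a + 1" "length a \<le> length b + 1"
    using geodesic_word_length_le[OF gb, of a] geodesic_word_length_le[OF ga, of b]
      ab wdist_sym[of R a b] by simp_all
  then have short_tails: "length (drop m a) \<le> 1" "length (drop m b) \<le> 1"
    unfolding m_def by auto
  have "\<exists>\<rho>. real (length \<rho>) \<le> 2 * \<delta> + 4 \<and>
      pres_eq (short_relators R (2 * (2 * \<delta> + 4) + 2)) (take m a @ \<rho>) (take m b)"
    by (rule short_relators_ladder)
      (use geodesic_words_fellow_travel[OF hc ga gb ab] in \<open>auto simp: m_def\<close>)
  then obtain \<rho> where \<rho>: "real (length \<rho>) \<le> 2 * \<delta> + 4" "pres_eq ?S (take m a @ \<rho>) (take m b)"
    by (auto simp: algebra_simps)
  have "pres_eq R (take m a @ drop m a @ [c]) b"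
    using ac by (metis append_assoc append_take_drop_id)
  also have "pres_eq R b (take m a @ \<rho> @ drop m b)"
    using pres_eq.pe_sym[OF pres_eq_append[OF
        pres_eq_short_relatorsD[OF \<rho>(2)] pres_eq.pe_refl, of "drop m b"]]
    by simp
  finally have "pres_eq R (drop m a @ [c]) (\<rho> @ drop m b)"
    by (rule pres_eq_append_cancel_left)
  then have last_cell: "pres_eq ?S (drop m a @ [c]) (\<rho> @ drop m b)"
    using \<rho>(1) short_tails hc unfolding hyp_const_def by (auto intro!: pres_eq_short_relatorsI)
  have "pres_eq ?S (take m a @ drop m a @ [c]) (take m a @ \<rho> @ drop m b)"
    using pres_eq_append[OF pres_eq.pe_refl last_cell] .
  also have "pres_eq ?S (take m a @ \<rho> @ drop m b) (take m b @ drop m b)"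
    using pres_eq_append[OF \<rho>(2) pres_eq.pe_refl, of "drop m b"] by simp
  finally show ?thesis by (metis append_assoc append_take_drop_id)
qed

lemma geodesic_word_short_relators:
  assumes hc: "hyp_const (pres_eq R) \<delta>"
    and "geodesic_word R a" and "pres_eq R a w"
  shows "pres_eq (short_relators R (4 * \<delta> + 10)) w a"
  using assms(2,3)
proof (induction w arbitrary: a rule: rev_induct)
  case Nil
  then have "a = []"
    using wdist_eq_0_iff[of R a "[]"] wdist_sym[of R a "[]"] unfolding geodesic_word_def by simp
  then show ?case by simp
next
  case (snoc c w)
  obtain a' where a': "geodesic_word R a'" "pres_eq R a' w"
    using geodesic_word_exists by blast
  have "pres_eq R (a' @ [c]) (w @ [c])"
    using a'(2) by (rule pres_eq_append) simp
  also have "pres_eq R (w @ [c]) a"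
    using snoc.prems(2) by (rule pres_eq.pe_sym)
  finally have "pres_eq R (a' @ [c]) a" .
  then have "pres_eq (short_relators R (4 * \<delta> + 10)) (a' @ [c]) a"
    using geodesic_words_append_short_relators[OF hc a'(1) snoc.prems(1)] by blast
  with pres_eq_append[OF snoc.IH[OF a'] pres_eq.pe_refl] show ?case
    by (rule pres_eq.pe_trans)
qed

theorem short_relators_presentation:
  assumes "hyp_const (pres_eq R) \<delta>"
  shows "pres_eq (short_relators R (4 * \<delta> + 10)) = pres_eq R"
proof (intro ext iffI)
  fix u v
  assume "pres_eq R u v"
  moreover obtain a where "geodesic_word R a" "pres_eq R a u"
    using geodesic_word_exists by blast
  ultimately show "pres_eq (short_relators R (4 * \<delta> + 10)) u v"
    using geodesic_word_short_relators[OF assms] pres_eq.pe_trans pres_eq.pe_sym by metis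
qed (rule pres_eq_short_relatorsD)

definition kernel_avoids_ball ::
  "('x word \<Rightarrow> 'x word \<Rightarrow> bool) \<Rightarrow> ('x word \<Rightarrow> 'x word \<Rightarrow> bool) \<Rightarrow> nat \<Rightarrow> bool" where
  "kernel_avoids_ball E E' r \<longleftrightarrow> (\<forall>w. wdist E [] w \<le> r \<and> \<not> E w [] \<longrightarrow> \<not> E' w [])"

lemma enat_le_radius: "kernel_avoids_ball E E' r \<Longrightarrow> enat r \<le> radius E E'"
  unfolding radius_def kernel_avoids_ball_def by (rule Sup_upper) blast

lemma pres_eq_reflect_through_ball:
  assumes "hyp_const (pres_eq R') \<delta>"
    and ball: "kernel_avoids_ball (pres_eq R) (pres_eq R') K"
    and "4 * \<delta> + 10 \<le> real K"
    and "pres_eq R' u v"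
  shows "pres_eq R u v"
proof (rule pres_eq_mono_relators)
  show "pres_eq (short_relators R' (4 * \<delta> + 10)) u v"
    using assms(1,4) short_relators_presentation by metis
next
  fix s
  assume "s \<in> short_relators R' (4 * \<delta> + 10)"
  then have "wdist (pres_eq R) [] s \<le> K" "pres_eq R' s []"
    using assms(3) wdist_Nil_le_length[of R s] unfolding short_relators_def by auto
  then show "pres_eq R s []"
    using ball unfolding kernel_avoids_ball_def by blast
qed

lemma eventually_kernel_avoids_ball:
  fixes R :: "nat \<Rightarrow> ('x::finite) word set"
  assumes hom: "\<And>i r. r \<in> R i \<Longrightarrow> pres_eq (R (Suc i)) r []"
  shows "eventually (\<lambda>i. kernel_avoids_ball (pres_eq (R i)) (pres_eq (R (Suc i))) K) sequentially"
proof -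
  \<comment> \<open>Each word dies at most once along the chain, and only finitely many are short.\<close>
  have dies_once: "eventually (\<lambda>i. pres_eq (R (Suc i)) w [] \<longrightarrow> pres_eq (R i) w []) sequentially"
    for w
  proof (cases "\<exists>j. pres_eq (R j) w []")
    case True
    then obtain j where "pres_eq (R j) w []" by blast
    then have "\<forall>i\<ge>j. pres_eq (R i) w []"
      using hom pres_eq_chain_mono by blast
    then show ?thesis unfolding eventually_sequentially by blast
  qed simp
  have "finite {w :: 'x word. length w \<le> K}"
    using finite_lists_length_le[of "UNIV :: ('x \<times> bool) set" K] by simp
  then have "eventually (\<lambda>i. \<forall>w \<in> {w. length w \<le> K}.
      pres_eq (R (Suc i)) w [] \<longrightarrow> pres_eq (R i) w []) sequentially"
    by (rule eventually_ball_finite) (intro ballI dies_once)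
  then show ?thesis
  proof (rule eventually_mono)
    fix i
    assume short_words:
      "\<forall>w \<in> {w. length w \<le> K}. pres_eq (R (Suc i)) w [] \<longrightarrow> pres_eq (R i) w []"
    show "kernel_avoids_ball (pres_eq (R i)) (pres_eq (R (Suc i))) K"
      unfolding kernel_avoids_ball_def
    proof (intro allI impI)
      fix w
      assume w: "wdist (pres_eq (R i)) [] w \<le> K \<and> \<not> pres_eq (R i) w []"
      obtain g where g: "geodesic_word (R i) g" "pres_eq (R i) g w"
        using geodesic_word_exists by blast
      have "length g \<le> K"
        using g w wdist_cong_right[of "R i" g w "[]"] unfolding geodesic_word_def by simp
      moreover have "\<not> pres_eq (R i) g []"
        using w pres_eq.pe_trans[OF pres_eq.pe_sym[OF g(2)]] by blast
      ultimately have "\<not> pres_eq (R (Suc i)) g []"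
        using short_words by blast
      moreover have "pres_eq (R (Suc i)) g w"
        using hom le_SucI[OF order_refl] g(2) by (rule pres_eq_chain_mono)
      ultimately show "\<not> pres_eq (R (Suc i)) w []"
        using pres_eq.pe_trans by blast
    qed
  qed
qed

lemma Limsup_eq_infinity_enatI:
  fixes f :: "'a \<Rightarrow> enat"
  assumes "F \<noteq> bot" and "\<And>K. eventually (\<lambda>i. enat K \<le> f i) F"
  shows "Limsup F f = \<infinity>"
proof (rule ccontr)
  assume "Limsup F f \<noteq> \<infinity>"
  then obtain n where "Limsup F f = enat n" by auto
  moreover have "enat (Suc n) \<le> Limsup F f"
    using assms by (intro le_Limsup) auto
  ultimately show False by simp
qed

lemma chain_stabilizes:
  assumes mono: "\<And>i j u v. i \<le> j \<Longrightarrow> E i u v \<Longrightarrow> E j u v"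
    and descend: "\<And>i u v. N \<le> i \<Longrightarrow> E (Suc i) u v \<Longrightarrow> E i u v"
  shows "(\<lambda>u v. \<exists>i. E i u v) = E N"
proof (intro ext iffI)
  fix u v
  have down: "E (N + k) u v \<Longrightarrow> E N u v" for k
  proof (induction k)
    case (Suc k)
    then show ?case using descend[of "N + k" u v] by simp
  qed simp
  assume "\<exists>i. E i u v"
  then obtain i where i: "E i u v" by blast
  show "E N u v"
  proof (cases "i \<le> N")
    case True
    then show ?thesis using mono i by blast
  next
    case False
    then have "i = N + (i - N)" by simp
    then show ?thesis using down i by metis
  qed
qed blast

lemma limsup_radius_eq_infinity:
  fixes R :: "nat \<Rightarrow> ('x::finite) word set"
  assumes hom: "\<And>i r. r \<in> R i \<Longrightarrow> pres_eq (R (Suc i)) r []"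
  shows "limsup (\<lambda>i. radius (pres_eq (R i)) (pres_eq (R (Suc i)))) = \<infinity>"
proof (rule Limsup_eq_infinity_enatI)
  fix K
  have "eventually (\<lambda>i. kernel_avoids_ball (pres_eq (R i)) (pres_eq (R (Suc i))) K) sequentially"
    using hom by (rule eventually_kernel_avoids_ball)
  then show "eventually (\<lambda>i. enat K \<le> radius (pres_eq (R i)) (pres_eq (R (Suc i)))) sequentially"
    by (rule eventually_mono) (rule enat_le_radius)
qed simp

lemma bounded_hyp_const_chain_stabilizes:
  fixes R :: "nat \<Rightarrow> ('x::finite) word set"
  assumes hom: "\<And>i r. r \<in> R i \<Longrightarrow> pres_eq (R (Suc i)) r []"
    and hyp: "\<And>i. hyp_const (pres_eq (R i)) (\<delta> i)"
    and bounded: "eventually (\<lambda>i. \<delta> i < real B) sequentially"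
  shows "\<exists>N. (\<lambda>u v. \<exists>i. pres_eq (R i) u v) = pres_eq (R N)"
proof -
  have "eventually (\<lambda>i. \<delta> (Suc i) < real B) sequentially"
    using bounded eventually_sequentially_Suc[of "\<lambda>i. \<delta> i < real B"] by simp
  moreover have "eventually (\<lambda>i.
      kernel_avoids_ball (pres_eq (R i)) (pres_eq (R (Suc i))) (4 * B + 10)) sequentially"
    using hom by (rule eventually_kernel_avoids_ball)
  ultimately have "eventually (\<lambda>i. \<delta> (Suc i) < real B \<and>
      kernel_avoids_ball (pres_eq (R i)) (pres_eq (R (Suc i))) (4 * B + 10)) sequentially"
    by (rule eventually_conj)
  then obtain N where N: "\<And>i. N \<le> i \<Longrightarrow> \<delta> (Suc i) < real B \<and>
      kernel_avoids_ball (pres_eq (R i)) (pres_eq (R (Suc i))) (4 * B + 10)"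
    unfolding eventually_sequentially by blast
  have "(\<lambda>u v. \<exists>i. pres_eq (R i) u v) = pres_eq (R N)"
  proof (rule chain_stabilizes)
    fix i j u v
    assume "i \<le> j" and "pres_eq (R i) u v"
    with hom show "pres_eq (R j) u v" by (rule pres_eq_chain_mono)
  next
    fix i u v
    assume "N \<le> i" and uv: "pres_eq (R (Suc i)) u v"
    with N have avoids: "kernel_avoids_ball (pres_eq (R i)) (pres_eq (R (Suc i))) (4 * B + 10)"
      and bound: "4 * \<delta> (Suc i) + 10 \<le> real (4 * B + 10)"
      by force+
    show "pres_eq (R i) u v"
      using hyp avoids bound uv by (rule pres_eq_reflect_through_ball)
  qed
  then show ?thesis by blast
qed

theorem proposition4p1:
  fixes R :: "nat \<Rightarrow> ('x::finite) word set"
    and \<delta> :: "nat \<Rightarrow> real"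
  assumes fin: "\<And>i. finite (R i)"
    and hom: "\<And>i r. r \<in> R i \<Longrightarrow> pres_eq (R (Suc i)) r []"
    and hyp: "\<And>i. hyp_const (pres_eq (R i)) (\<delta> i)"
    and lac: "lacunary_hyperbolic (\<lambda>u v. \<exists>i. pres_eq (R i) u v)"
  shows "(fin_presented (\<lambda>u v. \<exists>i. pres_eq (R i) u v) \<and>
          hyperbolic (\<lambda>u v. \<exists>i. pres_eq (R i) u v))
       \<or> (limsup (\<lambda>i. radius (pres_eq (R i)) (pres_eq (R (Suc i)))) = \<infinity> \<and>
          limsup (\<lambda>i. ereal (\<delta> i)) = \<infinity>)"
proof (cases "limsup (\<lambda>i. ereal (\<delta> i)) = \<infinity>")
  case True
  moreover have "limsup (\<lambda>i. radius (pres_eq (R i)) (pres_eq (R (Suc i)))) = \<infinity>"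
    using hom by (rule limsup_radius_eq_infinity)
  ultimately show ?thesis by simp
next
  case False
  then obtain B :: nat where "limsup (\<lambda>i. ereal (\<delta> i)) < ereal (real B)"
    using less_PInf_Ex_of_nat by blast
  then have "eventually (\<lambda>i. ereal (\<delta> i) < ereal (real B)) sequentially"
    by (rule Limsup_lessD)
  then have "eventually (\<lambda>i. \<delta> i < real B) sequentially"
    by simp
  with hom hyp have "\<exists>N. (\<lambda>u v. \<exists>i. pres_eq (R i) u v) = pres_eq (R N)"
    by (rule bounded_hyp_const_chain_stabilizes)
  then obtain N where limit: "(\<lambda>u v. \<exists>i. pres_eq (R i) u v) = pres_eq (R N)" ..
  show ?thesis
    unfolding limit fin_presented_def hyperbolic_def using fin hyp by blast
qed

end
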